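(* Let $s\in\{+1,-1\}$, $\alpha\ge\beta\ge-\tfrac12$, $m\ge1$, and let $x_1$ be the largest zero of $p^{(\alpha+1,\beta)}_m$. Let $f\in\mathcal B_s(I;\alpha,\beta)\setminus\{0\}$ be a polynomial of degree at most $2m$, and if $s=+1$ assume also $f(1)=0$. Then $r(f;I)\ge1-x_1$, with equality if and only if $f$ is a positive multiple of $P(x)=(1-x)\,\frac{p^{(\alpha+1,\beta)}_m(x)^2}{x_1-x}$.
   Context: $I=[-1,1]$; $w_{\alpha,\beta}(x)=c_{\alpha,\beta}(1-x)^\alpha(1+x)^\beta$ on $I$ normalized to a probability density; $P^{(\alpha,\beta)}_n$ Jacobi polynomials (orthogonal for $w_{\alpha,\beta}$, $P^{(\alpha,\beta)}_n(1)=\binom{n+\alpha}{n}$), $p^{(\alpha,\beta)}_n$ their $L^2(w_{\alpha,\beta})$-normalizations; $\widehat f(n)=\int_I f\,p^{(\alpha,\beta)}_nw_{\alpha,\beta}dx$. $\mathcal B_s(I;\alpha,\beta)$: continuous real $f$ on $I$ with $\widehat f(0)\le0$, $\{s\widehat f(n)\}$ eventually nonnegative, $sf(1)\le0$. $r(f;I)=\inf\{r\in(0,2]: f(x)\ge0\text{ for }x\in[-1,1-r)\}$. *)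

theory Defs
  imports "HOL-Analysis.Analysis" "HOL-Computational_Algebra.Polynomial"
begin

definition jacobi_weight0 :: "real \<Rightarrow> real \<Rightarrow> real \<Rightarrow> real" where
  "jacobi_weight0 a b x = (1 - x) powr a * (1 + x) powr b"

definition jacobi_weight :: "real \<Rightarrow> real \<Rightarrow> real \<Rightarrow> real" where
  "jacobi_weight a b x =
     jacobi_weight0 a b x / integral {-1..1} (jacobi_weight0 a b)"

text \<open>Jacobi polynomial P_n^{(a,b)} (standard normalization, P_n(1) = binom(n+a, n)),
  via the explicit formula
  P_n(x) = sum_k binom(n+a, n-k) binom(n+b, k) ((x-1)/2)^k ((x+1)/2)^(n-k).\<close>
definition jacobiP :: "real \<Rightarrow> real \<Rightarrow> nat \<Rightarrow> real \<Rightarrow> real" where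
  "jacobiP a b n x =
     (\<Sum>k\<le>n. ((real n + a) gchoose (n - k)) * ((real n + b) gchoose k)
              * ((x - 1) / 2) ^ k * ((x + 1) / 2) ^ (n - k))"

definition jacobi_p :: "real \<Rightarrow> real \<Rightarrow> nat \<Rightarrow> real \<Rightarrow> real" where
  "jacobi_p a b n x =
     jacobiP a b n x /
       sqrt (integral {-1..1} (\<lambda>t. (jacobiP a b n t)\<^sup>2 * jacobi_weight a b t))"

definition jacobi_coeff :: "real \<Rightarrow> real \<Rightarrow> (real \<Rightarrow> real) \<Rightarrow> nat \<Rightarrow> real" where
  "jacobi_coeff a b f n =
     integral {-1..1} (\<lambda>x. f x * jacobi_p a b n x * jacobi_weight a b x)"

definition class_B :: "real \<Rightarrow> real \<Rightarrow> real \<Rightarrow> (real \<Rightarrow> real) \<Rightarrow> bool" where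
  "class_B s a b f \<longleftrightarrow>
     continuous_on {-1..1} f \<and>
     jacobi_coeff a b f 0 \<le> 0 \<and>
     (\<forall>\<^sub>F n in sequentially. s * jacobi_coeff a b f n \<ge> 0) \<and>
     s * f 1 \<le> 0"

definition r_I :: "(real \<Rightarrow> real) \<Rightarrow> real" where
  "r_I f = Inf {r \<in> {0<..2}. \<forall>x\<in>{-1..<1-r}. f x \<ge> 0}"

definition jacobi_max_zero :: "real \<Rightarrow> real \<Rightarrow> nat \<Rightarrow> real" where
  "jacobi_max_zero a b m = Max {x. jacobiP a b m x = 0}"

end

theory Submission
  imports Defs
begin

text \<open>
  Gauss--Radau quadrature with nodes \<open>1\<close> and the zeros of \<open>P\<^sub>m\<^sup>(\<^sup>\<alpha>\<^sup>+\<^sup>1\<^sup>,\<^sup>\<beta>\<^sup>)\<close> integrates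
  polynomials of degree \<open>\<le> 2m\<close> exactly against \<open>w\<^sub>\<alpha>\<^sub>,\<^sub>\<beta>\<close>, with positive weights.
  If \<open>f \<ge> 0\<close> on \<open>[-1, x\<^sub>1)\<close>, then \<open>f\<close> is nonnegative at all nodes (at \<open>1\<close> because
  \<open>s f(1) \<le> 0\<close>) while its quadrature sum is a positive multiple of \<open>f-hat(0) \<le> 0\<close>; hence \<open>f\<close>
  vanishes at every node, doubly at the nodes below \<open>x\<^sub>1\<close>, where it has local minima.
  Counting degrees, \<open>f\<close> is a positive multiple of \<open>(x - 1)(x - x\<^sub>1)\<close> times the squares of
  \<open>x - y\<close> over the other zeros \<open>y\<close>. This is the polynomial \<open>P\<close> of the statement, and it is
  negative just to the right of \<open>x\<^sub>1\<close>.
\<close>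

lemma powr_mult_power: "(t::real) \<ge> 0 \<Longrightarrow> t powr a * t ^ k = t powr (a + real k)"
  by (cases "t = 0") (auto simp: powr_add powr_realpow)

lemma jacobi_weight0_nonneg: "jacobi_weight0 p q x \<ge> 0"
  unfolding jacobi_weight0_def by simp

lemma jacobi_weight0_pos: "x \<in> {-1<..<1} \<Longrightarrow> jacobi_weight0 p q x > 0"
  unfolding jacobi_weight0_def by simp

lemma jacobi_weight0_mult_power_plus:
  "x \<in> {-1..1} \<Longrightarrow> (1 + x) ^ j * jacobi_weight0 p q x = jacobi_weight0 p (q + real j) x"
  unfolding jacobi_weight0_def using powr_mult_power[of "1 + x" q j] by (simp add: algebra_simps)

lemma jacobi_weight0_mult_power_minus:
  "x \<in> {-1..1} \<Longrightarrow> (1 - x) ^ j * jacobi_weight0 p q x = jacobi_weight0 (p + real j) q x"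
  unfolding jacobi_weight0_def using powr_mult_power[of "1 - x" p j] by (simp add: algebra_simps)

definition jacobi_mass :: "real \<Rightarrow> real \<Rightarrow> real" where
  "jacobi_mass p q = 2 powr (p + q + 1) * Beta (q + 1) (p + 1)"

lemma jacobi_mass_pos: "p > -1 \<Longrightarrow> q > -1 \<Longrightarrow> jacobi_mass p q > 0"
  unfolding jacobi_mass_def Beta_def by (auto intro!: mult_pos_pos divide_pos_pos Gamma_real_pos)

text \<open>The substitution \<open>t = (1 + x) / 2\<close> turns the weight into the integrand of the Beta function.\<close>

lemma has_integral_jacobi_weight0:
  assumes "p > -1" "q > -1"
  shows "(jacobi_weight0 p q has_integral jacobi_mass p q) {-1..1}"
proof -
  have "((\<lambda>t. t powr ((q+1) - 1) * (1 - t) powr ((p+1) - 1)) has_integral Beta (q+1) (p+1)) (cbox 0 1)"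
    using has_integral_Beta_real[of "q+1" "p+1"] assms by simp
  from has_integral_affinity'[OF this, of "1/2" "1/2"]
  have "((\<lambda>x. ((1+x)/2) powr q * ((1-x)/2) powr p) has_integral (2 * Beta (q+1) (p+1))) {-1..1}"
    by (simp add: cbox_interval add_divide_distrib diff_divide_distrib add.commute)
  hence "((\<lambda>x. 2 powr (p+q) * (((1+x)/2) powr q * ((1-x)/2) powr p))
           has_integral (2 powr (p+q) * (2 * Beta (q+1) (p+1)))) {-1..1}"
    by (rule has_integral_mult_right)
  moreover have "2 powr (p+q) * (((1+x)/2) powr q * ((1-x)/2) powr p) = jacobi_weight0 p q x"
    if "x \<in> {-1..1}" for x
    using that unfolding jacobi_weight0_def by (simp add: powr_divide powr_add field_simps)
  ultimately show ?thesis
    unfolding jacobi_mass_def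
    by (subst (asm) has_integral_cong[where g="jacobi_weight0 p q"]) (auto simp: powr_add algebra_simps)
qed

lemma poly_eq_sum_shifted_powers:
  "poly g (x::real) = (\<Sum>j\<le>degree g. coeff (g \<circ>\<^sub>p [:-1, 1:]) j * (1 + x) ^ j)"
proof -
  have "poly g x = poly (g \<circ>\<^sub>p [:-1, 1:]) (1 + x)" by (simp add: poly_pcompose algebra_simps)
  also have "\<dots> = (\<Sum>j\<le>degree g. coeff (g \<circ>\<^sub>p [:-1, 1:]) j * (1 + x) ^ j)"
    by (subst poly_altdef) (simp add: degree_pcompose)
  finally show ?thesis .
qed

lemma integrable_poly_jacobi_weight0:
  assumes "p > -1" "q > -1"
  shows "(\<lambda>x. poly g x * jacobi_weight0 p q x) integrable_on {-1..1}"
proof (rule integrable_eq)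
  show "(\<lambda>x. \<Sum>j\<le>degree g. coeff (g \<circ>\<^sub>p [:-1, 1:]) j * jacobi_weight0 p (q + real j) x)
          integrable_on {-1..1}"
    using assms
    by (intro integrable_sum integrable_on_mult_right has_integral_integrable[OF has_integral_jacobi_weight0]) auto
  show "(\<Sum>j\<le>degree g. coeff (g \<circ>\<^sub>p [:-1, 1:]) j * jacobi_weight0 p (q + real j) x)
          = poly g x * jacobi_weight0 p q x" if "x \<in> {-1..1}" for x
    unfolding poly_eq_sum_shifted_powers[of g x] sum_distrib_right
    using jacobi_weight0_mult_power_plus[OF that] by (simp add: mult.assoc)
qed

text \<open>On \<open>[-1/2, 1/2]\<close> the integrand is continuous, so it cannot have zero integral there
  without vanishing identically.\<close>

lemma integral_poly_jacobi_weight0_pos: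
  assumes "p > -1" "q > -1" "g \<noteq> 0" "\<And>x. x \<in> {-1<..<1} \<Longrightarrow> poly g x \<ge> 0"
  shows "integral {-1..1} (\<lambda>x. poly g x * jacobi_weight0 p q x) > 0"
proof -
  let ?f = "\<lambda>x. poly g x * jacobi_weight0 p q x"
  have nonneg: "?f x \<ge> 0" if "x \<in> {-1..1}" for x
  proof (cases "x \<in> {-1<..<1}")
    case True
    then show ?thesis using assms(4) by (simp add: jacobi_weight0_nonneg)
  next
    case False
    then have "x = 1 \<or> x = -1" using that by auto
    then show ?thesis by (auto simp: jacobi_weight0_def)
  qed
  have sub: "{-1/2..1/2::real} \<subseteq> {-1..1}" by auto
  have int: "?f integrable_on {-1..1}" by (rule integrable_poly_jacobi_weight0[OF assms(1,2)])
  have int_sub: "?f integrable_on {-1/2..1/2}" using integrable_on_subinterval[OF int sub] .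
  have le: "integral {-1/2..1/2} ?f \<le> integral {-1..1} ?f"
    by (rule integral_subset_le[OF sub int_sub int]) (use nonneg in auto)
  have cont: "continuous_on {-1/2..1/2} ?f"
    unfolding jacobi_weight0_def by (intro continuous_intros) auto
  have "integral {-1/2..1/2} ?f \<noteq> 0"
  proof
    assume zero: "integral {-1/2..1/2} ?f = 0"
    have "?f x = 0" if "x \<in> {-1/2..1/2}" for x
      by (rule has_integral_0_cbox_imp_0[of "-1/2" "1/2" ?f])
        (use cont that int_sub zero nonneg in \<open>auto simp: cbox_interval dest: integrable_integral\<close>)
    then have "poly g x = 0" if "x \<in> {-1/2..1/2}" for x
      using that jacobi_weight0_pos[of x p q] by fastforce
    then have "{-1/2..1/2::real} \<subseteq> {x. poly g x = 0}" by auto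
    moreover have "infinite {-1/2..1/2::real}" by simp
    ultimately show False using poly_roots_finite[OF assms(3)] finite_subset by blast
  qed
  moreover have "integral {-1/2..1/2} ?f \<ge> 0"
    by (rule integral_nonneg[OF int_sub]) (use nonneg in auto)
  ultimately show ?thesis using le by linarith
qed

section \<open>Orthogonality of Jacobi polynomials\<close>

lemma alternating_binomial_sum_Suc:
  fixes g :: "nat \<Rightarrow> real"
  shows "(\<Sum>k\<le>Suc n. (-1)^k * real (Suc n choose k) * g k) =
         (\<Sum>k\<le>n. (-1)^k * real (n choose k) * (g k - g (Suc k)))"
proof -
  have split: "real (Suc n choose k) = real (n choose k) + (case k of 0 \<Rightarrow> 0 | Suc k' \<Rightarrow> real (n choose k'))"
    for k
    by (cases k) auto
  have "(\<Sum>k\<le>Suc n. (-1)^k * (case k of 0 \<Rightarrow> 0 | Suc k' \<Rightarrow> real (n choose k')) * g k)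
      = - (\<Sum>k\<le>n. (-1)^k * real (n choose k) * g (Suc k))"
    by (subst sum.atMost_Suc_shift) (simp add: sum_negf[symmetric])
  then show ?thesis
    unfolding split by (simp add: algebra_simps sum.distrib sum_subtractf)
qed

text \<open>An \<open>n\<close>-th finite difference annihilates the degree \<open>j < n\<close> polynomial
  \<open>pochhammer (c - k) j\<close> in \<open>k\<close>.\<close>

lemma alternating_binomial_sum_pochhammer:
  "j < n \<Longrightarrow> (\<Sum>k\<le>n. (-1)^k * real (n choose k) * pochhammer (c - real k) j) = 0"
proof (induction n arbitrary: c j)
  case 0
  then show ?case by simp
next
  case (Suc n)
  show ?case
  proof (cases j)
    case 0
    then show ?thesis by (subst alternating_binomial_sum_Suc) simp
  next
    case (Suc i)
    have diff: "pochhammer y (Suc i) - pochhammer (y - 1) (Suc i) = real (Suc i) * pochhammer y i"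
      for y :: real
    proof -
      have "pochhammer (y - 1) (Suc i) = (y - 1) * pochhammer y i" by (simp add: pochhammer_rec)
      moreover have "pochhammer y (Suc i) = (y + real i) * pochhammer y i" by (simp add: pochhammer_rec')
      ultimately show ?thesis by (simp add: algebra_simps)
    qed
    have "(\<Sum>k\<le>Suc n. (-1)^k * real (Suc n choose k) * pochhammer (c - real k) j)
        = real (Suc i) * (\<Sum>k\<le>n. (-1)^k * real (n choose k) * pochhammer (c - real k) i)"
      unfolding alternating_binomial_sum_Suc sum_distrib_left
      using diff[of "c - real _"] by (simp add: Suc algebra_simps)
    also have "\<dots> = 0" using Suc.IH[of i c] Suc.prems Suc by simp
    finally show ?thesis .
  qed
qed

lemma gbinomial_mult_Gamma_lower:
  assumes "k \<le> n" "a > -1"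
  shows "((real n + a) gchoose (n - k)) * Gamma (a + real k + 1) = Gamma (a + real n + 1) / fact (n - k)"
proof -
  have pos: "a + real k + 1 > 0" using assms by simp
  then have nonpole: "a + real k + 1 \<notin> \<int>\<^sub>\<le>\<^sub>0" by auto
  have "(real n + a) gchoose (n - k) = pochhammer (a + real k + 1) (n - k) / fact (n - k)"
    using assms(1) by (simp add: gbinomial_pochhammer' of_nat_diff algebra_simps)
  also have "pochhammer (a + real k + 1) (n - k) = Gamma (a + real n + 1) / Gamma (a + real k + 1)"
    using pochhammer_Gamma[OF nonpole, of "n - k"] assms(1) by (simp add: of_nat_diff algebra_simps)
  finally show ?thesis using Gamma_real_pos[OF pos] by (simp add: field_simps)
qed

lemma gbinomial_mult_Gamma_upper:
  assumes "k \<le> n" "b > -1"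
  shows "((real n + b) gchoose k) * Gamma (b + real (n - k) + real j + 1)
       = Gamma (b + real n + 1) / fact k * pochhammer (b + real n + 1 - real k) j"
proof -
  define z where "z = b + real n + 1 - real k"
  have pos: "z > 0" using assms unfolding z_def by simp
  then have nonpole: "z \<notin> \<int>\<^sub>\<le>\<^sub>0" by auto
  have "(real n + b) gchoose k = pochhammer z k / fact k"
    by (simp add: gbinomial_pochhammer' z_def algebra_simps)
  also have "pochhammer z k = Gamma (b + real n + 1) / Gamma z"
    using pochhammer_Gamma[OF nonpole, of k] by (simp add: z_def)
  finally have "(real n + b) gchoose k = Gamma (b + real n + 1) / Gamma z / fact k" by simp
  moreover have "Gamma (b + real (n - k) + real j + 1) = pochhammer z j * Gamma z"
    using pochhammer_Gamma[OF nonpole, of j] Gamma_real_pos[OF pos] assms(1)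
    by (simp add: z_def of_nat_diff algebra_simps)
  ultimately show ?thesis using Gamma_real_pos[OF pos] by (simp add: z_def field_simps)
qed

lemma jacobiP_term_mult_weight:
  assumes "x \<in> {-1..1}" "k \<le> n"
  shows "((x - 1)/2)^k * ((x + 1)/2)^(n - k) * (1 + x)^j * jacobi_weight0 a b x
     = (-1)^k / 2^n * jacobi_weight0 (a + real k) (b + real (n - k) + real j) x"
proof -
  have "((x - 1)/2)^k * ((x + 1)/2)^(n - k) = (-1)^k / (2^k * 2^(n - k)) * ((1 - x)^k * (1 + x)^(n - k))"
    by (simp add: power_divide power_minus' power_mult_distrib[symmetric] algebra_simps flip: power_minus)
  also have "(2::real)^k * 2^(n - k) = 2^n" using assms(2) by (simp flip: power_add)
  finally have "((x - 1)/2)^k * ((x + 1)/2)^(n - k) * (1 + x)^j * jacobi_weight0 a b x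
      = (-1)^k / 2^n * ((1 - x)^k * ((1 + x)^(n - k) * (1 + x)^j * jacobi_weight0 a b x))"
    by (simp add: mult_ac)
  also have "(1 + x)^(n - k) * (1 + x)^j * jacobi_weight0 a b x = jacobi_weight0 a (b + real (n - k) + real j) x"
    using jacobi_weight0_mult_power_plus[OF assms(1), of "n - k + j"] by (simp add: power_add add.assoc)
  finally show ?thesis
    using jacobi_weight0_mult_power_minus[OF assms(1)] by simp
qed

lemma gbinomial_mult_jacobi_mass:
  assumes "k \<le> n" "a > -1" "b > -1"
  shows "((real n + a) gchoose (n - k)) * ((real n + b) gchoose k)
           * jacobi_mass (a + real k) (b + real (n - k) + real j)
         = 2 powr (a + b + real n + real j + 1) * Gamma (a + real n + 1) * Gamma (b + real n + 1)
             / (Gamma (a + b + real n + real j + 2) * fact n)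
           * (real (n choose k) * pochhammer (b + real n + 1 - real k) j)"
proof -
  define P where "P = 2 powr (a + b + real n + real j + 1)"
  define G where "G = Gamma (a + b + real n + real j + 2)"
  define Ga where "Ga = Gamma (a + real n + 1)"
  define Gb where "Gb = Gamma (b + real n + 1)"
  have mass: "jacobi_mass (a + real k) (b + real (n - k) + real j)
      = P / G * (Gamma (a + real k + 1) * Gamma (b + real (n - k) + real j + 1))"
    using assms(1) unfolding jacobi_mass_def Beta_def P_def G_def by (simp add: of_nat_diff algebra_simps)
  have "((real n + a) gchoose (n - k)) * ((real n + b) gchoose k)
        * (Gamma (a + real k + 1) * Gamma (b + real (n - k) + real j + 1))
      = (((real n + a) gchoose (n - k)) * Gamma (a + real k + 1))
        * (((real n + b) gchoose k) * Gamma (b + real (n - k) + real j + 1))"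
    by (simp only: mult_ac)
  also have "\<dots> = (Ga / fact (n - k)) * (Gb / fact k * pochhammer (b + real n + 1 - real k) j)"
    unfolding Ga_def Gb_def gbinomial_mult_Gamma_lower[OF assms(1,2)]
      gbinomial_mult_Gamma_upper[OF assms(1,3)] ..
  finally have gammas: "((real n + a) gchoose (n - k)) * ((real n + b) gchoose k)
        * (Gamma (a + real k + 1) * Gamma (b + real (n - k) + real j + 1))
      = (Ga / fact (n - k)) * (Gb / fact k * pochhammer (b + real n + 1 - real k) j)" .
  have "((real n + a) gchoose (n - k)) * ((real n + b) gchoose k)
        * jacobi_mass (a + real k) (b + real (n - k) + real j)
      = P / G * (((real n + a) gchoose (n - k)) * ((real n + b) gchoose k)
        * (Gamma (a + real k + 1) * Gamma (b + real (n - k) + real j + 1)))"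
    unfolding mass by (simp only: mult_ac)
  also have "\<dots> = P / G * ((Ga / fact (n - k)) * (Gb / fact k * pochhammer (b + real n + 1 - real k) j))"
    unfolding gammas ..
  also have "\<dots> = P * Ga * Gb / (G * fact n) * (real (n choose k) * pochhammer (b + real n + 1 - real k) j)"
    unfolding binomial_fact[OF assms(1)] by (simp add: field_simps)
  finally show ?thesis unfolding P_def G_def Ga_def Gb_def .
qed

text \<open>Expanding \<open>P\<^sub>n\<close> termwise, each term integrates to a Beta value; after the
  Gamma bookkeeping the sum is an alternating binomial sum of a polynomial of degree \<open>j < n\<close>.\<close>

lemma jacobiP_orthogonal_power:
  assumes "a > -1" "b > -1" "j < n"
  shows "((\<lambda>x. jacobiP a b n x * (1 + x)^j * jacobi_weight0 a b x) has_integral 0) {-1..1}"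
proof -
  define c where "c k = ((real n + a) gchoose (n - k)) * ((real n + b) gchoose k)" for k
  define w where "w k = jacobi_weight0 (a + real k) (b + real (n - k) + real j)" for k
  define M where "M = 2 powr (a + b + real n + real j + 1) * Gamma (a + real n + 1) * Gamma (b + real n + 1)
    / (Gamma (a + b + real n + real j + 2) * fact n)"
  have integral: "((\<lambda>x. \<Sum>k\<le>n. c k * ((-1)^k / 2^n * w k x))
     has_integral (\<Sum>k\<le>n. c k * ((-1)^k / 2^n * jacobi_mass (a + real k) (b + real (n - k) + real j))))
     {-1..1}"
    unfolding w_def using assms
    by (intro has_integral_sum has_integral_mult_right has_integral_jacobi_weight0) auto
  have expand: "jacobiP a b n x * (1 + x)^j * jacobi_weight0 a b x = (\<Sum>k\<le>n. c k * ((-1)^k / 2^n * w k x))"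
    if "x \<in> {-1..1}" for x
    unfolding jacobiP_def sum_distrib_right
  proof (intro sum.cong refl)
    fix k assume "k \<in> {..n}"
    then have "k \<le> n" by simp
    show "((real n + a gchoose (n - k)) * (real n + b gchoose k) * ((x - 1) / 2) ^ k * ((x + 1) / 2) ^ (n - k))
        * (1 + x) ^ j * jacobi_weight0 a b x = c k * ((-1)^k / 2^n * w k x)"
      unfolding c_def w_def jacobiP_term_mult_weight[OF that \<open>k \<le> n\<close>, symmetric] by (simp add: mult.assoc)
  qed
  have "c k * ((-1)^k / 2^n * jacobi_mass (a + real k) (b + real (n - k) + real j))
      = M / 2^n * ((-1)^k * real (n choose k) * pochhammer (b + real n + 1 - real k) j)" if "k \<le> n" for k
    using gbinomial_mult_jacobi_mass[OF that assms(1,2), of j] unfolding c_def M_def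
    by (simp add: mult_ac)
  then have "(\<Sum>k\<le>n. c k * ((-1)^k / 2^n * jacobi_mass (a + real k) (b + real (n - k) + real j)))
     = M / 2^n * (\<Sum>k\<le>n. (-1)^k * real (n choose k) * pochhammer (b + real n + 1 - real k) j)"
    unfolding sum_distrib_left by (intro sum.cong refl) auto
  also have "\<dots> = 0" using alternating_binomial_sum_pochhammer[OF assms(3)] by simp
  finally show ?thesis
    using integral by (subst has_integral_cong[OF expand]) auto
qed

definition jacobi_poly :: "real \<Rightarrow> real \<Rightarrow> nat \<Rightarrow> real poly" where
  "jacobi_poly a b n = (\<Sum>k\<le>n. smult (((real n + a) gchoose (n - k)) * ((real n + b) gchoose k))
                          ([:-1/2, 1/2:]^k * [:1/2, 1/2:]^(n - k)))"

lemma poly_jacobi_poly: "poly (jacobi_poly a b n) x = jacobiP a b n x"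
  unfolding jacobi_poly_def jacobiP_def
  by (simp add: poly_sum algebra_simps add_divide_distrib diff_divide_distrib)

lemma degree_jacobi_poly: "degree (jacobi_poly a b n) \<le> n"
  unfolding jacobi_poly_def
proof (intro degree_sum_le)
  fix k assume "k \<in> {..n}"
  have "degree ([:-1/2, 1/2:]^k * [:1/2, 1/2:]^(n - k) :: real poly) \<le> k + (n - k)"
    by (rule order.trans[OF degree_mult_le add_mono]) (auto intro: order.trans[OF degree_power_le])
  also have "\<dots> = n" using \<open>k \<in> {..n}\<close> by simp
  finally show "degree (smult (((real n + a) gchoose (n - k)) * ((real n + b) gchoose k))
                  ([:-1/2, 1/2:]^k * [:1/2, 1/2:]^(n - k))) \<le> n"
    by (rule order.trans[OF degree_smult_le])
qed simp

lemma jacobi_poly_nonzero: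
  assumes "a > -1"
  shows "jacobi_poly a b n \<noteq> 0"
proof -
  have "poly (jacobi_poly a b n) 1 = (\<Sum>k\<le>n. if k = 0 then (real n + a) gchoose n else 0)"
    unfolding poly_jacobi_poly jacobiP_def by (intro sum.cong refl) auto
  also have "\<dots> = pochhammer (a + 1) n / fact n"
    by (simp add: gbinomial_pochhammer' algebra_simps)
  also have "\<dots> > 0" using assms by (auto intro!: divide_pos_pos pochhammer_pos)
  finally show ?thesis by (metis less_irrefl poly_0)
qed

lemma jacobi_poly_orthogonal:
  assumes "a > -1" "b > -1" "degree g < n"
  shows "((\<lambda>x. poly (jacobi_poly a b n * g) x * jacobi_weight0 a b x) has_integral 0) {-1..1}"
proof -
  have "((\<lambda>x. \<Sum>j\<le>degree g. coeff (g \<circ>\<^sub>p [:-1, 1:]) j * (jacobiP a b n x * (1 + x)^j * jacobi_weight0 a b x))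
     has_integral (\<Sum>j\<le>degree g. coeff (g \<circ>\<^sub>p [:-1, 1:]) j * 0)) {-1..1}"
    using assms by (intro has_integral_sum has_integral_mult_right jacobiP_orthogonal_power) auto
  moreover have "(\<Sum>j\<le>degree g. coeff (g \<circ>\<^sub>p [:-1, 1:]) j * (jacobiP a b n x * (1 + x)^j * jacobi_weight0 a b x))
     = poly (jacobi_poly a b n * g) x * jacobi_weight0 a b x" for x
    unfolding poly_mult poly_jacobi_poly poly_eq_sum_shifted_powers[of g x] sum_distrib_left sum_distrib_right
    by (intro sum.cong refl) (simp add: mult_ac)
  ultimately show ?thesis by simp
qed

section \<open>Zeros of Jacobi polynomials\<close>

lemma prod_linear_powers_nonzero: "(\<Prod>w\<in>S. [:-w, 1:] ^ k w) \<noteq> (0::'a::idom poly)"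
  by (induction S rule: infinite_finite_induct) auto

lemma degree_prod_linear_powers:
  "finite S \<Longrightarrow> degree (\<Prod>w\<in>S. [:-w, 1:] ^ k w :: 'a::idom poly) = (\<Sum>w\<in>S. k w)"
  by (subst degree_prod_eq_sum_degree) (auto simp: degree_linear_power)

lemma order_linear_power: "order z ([:-w, 1:] ^ k :: 'a::idom poly) = (if z = w then k else 0)"
proof (cases "z = w")
  case True
  then show ?thesis by (simp add: order_power_n_n)
next
  case False
  then have "poly ([:-w, 1:] ^ k) z \<noteq> 0" by simp
  then show ?thesis using False by (simp add: order_0I)
qed

lemma order_prod_linear_powers:
  "finite S \<Longrightarrow> order z (\<Prod>w\<in>S. [:-w, 1:] ^ k w :: 'a::idom poly) = (if z \<in> S then k z else 0)"
proof (induction S rule: finite_induct)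
  case empty
  then show ?case by (simp add: order_0I)
next
  case (insert a S)
  then show ?case
    by (auto simp: order_mult prod_linear_powers_nonzero order_linear_power)
qed

lemma prod_linear_powers_dvd:
  fixes p :: "'a::idom poly"
  assumes "p \<noteq> 0" "finite S" "\<And>z. z \<in> S \<Longrightarrow> k z \<le> order z p"
  shows "(\<Prod>w\<in>S. [:-w, 1:] ^ k w) dvd p"
  using assms(2,1,3)
proof (induction S arbitrary: p rule: finite_induct)
  case empty
  then show ?case by simp
next
  case (insert a S)
  have "[:-a, 1:] ^ k a dvd p" using insert.prems by (simp add: order_divides)
  then obtain p' where p': "p = [:-a, 1:] ^ k a * p'" by (elim dvdE)
  have "p' \<noteq> 0" using p' insert.prems by auto
  moreover have "order z p' = order z p" if "z \<in> S" for z
    using that insert p' by (auto simp: order_mult order_linear_power)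
  ultimately have "(\<Prod>w\<in>S. [:-w, 1:] ^ k w) dvd p'" using insert by auto
  then show ?case using p' insert by (simp add: mult_dvd_mono)
qed

lemma dvd_degree_le_imp_smult:
  fixes p f :: "'a::field poly"
  assumes "p dvd f" "f \<noteq> 0" "degree f \<le> degree p"
  obtains c where "c \<noteq> 0" "f = smult c p"
proof -
  obtain q where q: "f = p * q" using assms(1) by (elim dvdE)
  then have "p \<noteq> 0" "q \<noteq> 0" using assms(2) by auto
  then have "degree q = 0" using q assms(3) by (simp add: degree_mult_eq)
  then have const: "q = [:coeff q 0:]" by (rule degree_0_id[symmetric])
  have "f = smult (coeff q 0) p" using q by (subst (asm) const) (simp add: mult.commute)
  moreover have "coeff q 0 \<noteq> 0" using \<open>q \<noteq> 0\<close> const by (metis pCons_0_0)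
  ultimately show ?thesis using that by blast
qed

text \<open>A polynomial whose zeros in an open interval all have even order does not change sign there:
  divide out a double factor and use the intermediate value theorem once no zeros are left.\<close>

lemma poly_sign_constant_if_even_orders:
  fixes h :: "real poly"
  assumes "h \<noteq> 0" "\<And>z. z \<in> {l<..<u} \<Longrightarrow> poly h z = 0 \<Longrightarrow> even (order z h)"
  shows "(\<forall>x\<in>{l<..<u}. poly h x \<ge> 0) \<or> (\<forall>x\<in>{l<..<u}. poly h x \<le> 0)"
  using assms
proof (induction "degree h" arbitrary: h rule: less_induct)
  case less
  show ?case
  proof (cases "\<exists>z\<in>{l<..<u}. poly h z = 0")
    case True
    then obtain z where z: "z \<in> {l<..<u}" "poly h z = 0" by blast
    have "order z h \<noteq> 0" using z less.prems order_root by blast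
    with less.prems(2)[OF z] have "2 \<le> order z h" by presburger
    then have "[:-z, 1:] ^ 2 dvd h" by (simp add: order_divides)
    then obtain h' where h': "h = [:-z, 1:] ^ 2 * h'" by (elim dvdE)
    have h'0: "h' \<noteq> 0" using h' less.prems by auto
    have deg: "degree h' < degree h" using h' h'0 by (simp add: degree_mult_eq degree_linear_power)
    have "even (order z' h')" if "z' \<in> {l<..<u}" "poly h' z' = 0" for z'
    proof -
      have "even (order z' h)" using less.prems(2) that h' by simp
      moreover have "order z' h = order z' ([:-z, 1:] ^ 2) + order z' h'"
        using h' less.prems(1) by (simp add: order_mult)
      ultimately show ?thesis by (auto simp: order_linear_power split: if_splits)
    qed
    with less.hyps[OF deg h'0]
    have "(\<forall>x\<in>{l<..<u}. poly h' x \<ge> 0) \<or> (\<forall>x\<in>{l<..<u}. poly h' x \<le> 0)" by blast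
    then show ?thesis
      unfolding h' by (auto intro: mult_nonneg_nonneg mult_nonneg_nonpos)
  next
    case False
    show ?thesis
    proof (rule ccontr)
      assume "\<not> ?thesis"
      then obtain x1 x2 where x: "x1 \<in> {l<..<u}" "x2 \<in> {l<..<u}" "poly h x1 < 0" "poly h x2 > 0"
        by (auto simp: not_le)
      have cont: "continuous_on A (poly h)" for A by (intro continuous_intros)
      have "\<exists>x. min x1 x2 \<le> x \<and> x \<le> max x1 x2 \<and> poly h x = 0"
      proof (cases "x1 \<le> x2")
        case True
        then show ?thesis using IVT'[of "poly h" x1 0 x2, OF _ _ _ cont] x by auto
      next
        case False
        then show ?thesis using IVT2'[of "poly h" x1 0 x2, OF _ _ _ cont] x by auto
      qed
      then obtain x where "min x1 x2 \<le> x" "x \<le> max x1 x2" "poly h x = 0" by blast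
      moreover have "x \<in> {l<..<u}" using calculation x by auto
      ultimately show False using False by blast
    qed
  qed
qed

text \<open>Multiplying \<open>P\<^sub>n\<close> by the product over its interior zeros of odd order gives a polynomial of
  constant sign on \<open>(-1, 1)\<close>; were there fewer than \<open>n\<close> interior zeros, orthogonality would
  force its weighted integral to vanish.\<close>

lemma card_jacobi_poly_interior_zeros:
  assumes "a > -1" "b > -1"
  shows "card {x\<in>{-1<..<1}. poly (jacobi_poly a b n) x = 0} \<ge> n"
proof (rule ccontr)
  define Q where "Q = jacobi_poly a b n"
  define R where "R = {x\<in>{-1<..<1}. poly Q x = 0}"
  assume "\<not> ?thesis"
  then have less: "card R < n" unfolding R_def Q_def by simp
  have Q0: "Q \<noteq> 0" unfolding Q_def by (rule jacobi_poly_nonzero[OF assms(1)])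
  have "finite R" unfolding R_def using poly_roots_finite[OF Q0] by (rule finite_subset[rotated]) auto
  define S where "S = {z\<in>R. odd (order z Q)}"
  have finS: "finite S" using \<open>finite R\<close> unfolding S_def by auto
  define g where "g = (\<Prod>w\<in>S. [:-w, 1:] ^ 1 :: real poly)"
  have "degree g = card S" unfolding g_def using degree_prod_linear_powers[OF finS, of "\<lambda>_. 1"] by simp
  also have "\<dots> \<le> card R" unfolding S_def using \<open>finite R\<close> by (intro card_mono) auto
  finally have dg: "degree g < n" using less by simp
  define h where "h = Q * g"
  have h0: "h \<noteq> 0" unfolding h_def g_def using Q0 prod_linear_powers_nonzero[of "\<lambda>_. 1" S] by simp
  have zero: "integral {-1..1} (\<lambda>x. poly h x * jacobi_weight0 a b x) = 0"
    unfolding h_def Q_def using jacobi_poly_orthogonal[OF assms dg] by (rule integral_unique)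
  have "even (order z h)" if "z \<in> {-1<..<1}" "poly h z = 0" for z
  proof -
    have "order z h = order z Q + (if z \<in> S then 1 else 0)"
      unfolding h_def g_def using Q0 prod_linear_powers_nonzero[of "\<lambda>_. 1" S]
        order_prod_linear_powers[OF finS, of z "\<lambda>_. 1"] by (simp add: order_mult)
    moreover have "z \<in> S \<longleftrightarrow> odd (order z Q)"
      using that(1) Q0 by (auto simp: S_def R_def order_root dest: odd_pos)
    ultimately show ?thesis by simp
  qed
  from poly_sign_constant_if_even_orders[OF h0 this]
  consider "\<forall>x\<in>{-1<..<1}. poly h x \<ge> 0" | "\<forall>x\<in>{-1<..<1}. poly (-h) x \<ge> 0" by force
  then show False
  proof cases
    case 1
    with integral_poly_jacobi_weight0_pos[OF assms h0] zero show False by simp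
  next
    case 2
    with integral_poly_jacobi_weight0_pos[OF assms, of "-h"] h0 zero show False by simp
  qed
qed

definition jacobi_zeros :: "real \<Rightarrow> real \<Rightarrow> nat \<Rightarrow> real set" where
  "jacobi_zeros a b n = {x. jacobiP a b n x = 0}"

text \<open>Since \<open>P\<^sub>n\<close> has degree at most \<open>n\<close>, the \<open>n\<close> interior zeros are all of its zeros,
  and they are simple.\<close>

theorem jacobi_zeros_simple:
  assumes "a > -1" "b > -1"
  shows "finite (jacobi_zeros a b n)" "card (jacobi_zeros a b n) = n"
    "jacobi_zeros a b n \<subseteq> {-1<..<1}"
    "\<exists>c. c \<noteq> 0 \<and> jacobi_poly a b n = smult c (\<Prod>w\<in>jacobi_zeros a b n. [:-w, 1:])"
proof -
  define Q where "Q = jacobi_poly a b n"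
  define R where "R = {x\<in>{-1<..<1}. poly Q x = 0}"
  have Q0: "Q \<noteq> 0" unfolding Q_def by (rule jacobi_poly_nonzero[OF assms(1)])
  have fin: "finite R" unfolding R_def using poly_roots_finite[OF Q0] by (rule finite_subset[rotated]) auto
  have "(\<Prod>w\<in>R. [:-w, 1:] ^ 1) dvd Q"
    using Q0 fin by (rule prod_linear_powers_dvd) (use Q0 in \<open>auto simp: R_def order_root\<close>)
  then have dvd: "(\<Prod>w\<in>R. [:-w, 1:]) dvd Q" by simp
  have degR: "degree (\<Prod>w\<in>R. [:-w, 1:] :: real poly) = card R"
    using degree_prod_linear_powers[OF fin, of "\<lambda>_. 1"] by simp
  have "degree Q \<le> n" unfolding Q_def by (rule degree_jacobi_poly)
  moreover have "n \<le> card R" unfolding R_def Q_def by (rule card_jacobi_poly_interior_zeros[OF assms])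
  ultimately have "degree Q \<le> degree (\<Prod>w\<in>R. [:-w, 1:] :: real poly)" unfolding degR by simp
  then obtain c where c: "c \<noteq> 0" "Q = smult c (\<Prod>w\<in>R. [:-w, 1:])"
    by (rule dvd_degree_le_imp_smult[OF dvd Q0])
  then have card: "card R = n"
    using degR \<open>degree Q \<le> n\<close> \<open>n \<le> card R\<close> by simp
  have zeros: "jacobi_zeros a b n = R"
    unfolding jacobi_zeros_def poly_jacobi_poly[symmetric] Q_def[symmetric]
    using c fin by (auto simp: poly_prod)
  show "finite (jacobi_zeros a b n)" "card (jacobi_zeros a b n) = n" "jacobi_zeros a b n \<subseteq> {-1<..<1}"
    using fin card by (auto simp: zeros R_def)
  show "\<exists>c. c \<noteq> 0 \<and> jacobi_poly a b n = smult c (\<Prod>w\<in>jacobi_zeros a b n. [:-w, 1:])"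
    using c unfolding zeros Q_def by blast
qed

lemma jacobi_max_zero:
  assumes "a > -1" "b > -1" "n \<ge> 1"
  shows "jacobi_max_zero a b n \<in> jacobi_zeros a b n" "-1 < jacobi_max_zero a b n" "jacobi_max_zero a b n < 1"
    "\<And>y. y \<in> jacobi_zeros a b n \<Longrightarrow> y \<le> jacobi_max_zero a b n"
proof -
  have max: "jacobi_max_zero a b n = Max (jacobi_zeros a b n)"
    unfolding jacobi_max_zero_def jacobi_zeros_def ..
  have "jacobi_zeros a b n \<noteq> {}" using jacobi_zeros_simple(2)[OF assms(1,2), of n] assms(3) by auto
  then show mem: "jacobi_max_zero a b n \<in> jacobi_zeros a b n"
    unfolding max using jacobi_zeros_simple(1)[OF assms(1,2)] by simp
  show "-1 < jacobi_max_zero a b n" "jacobi_max_zero a b n < 1"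
    using mem jacobi_zeros_simple(3)[OF assms(1,2), of n] by auto
  show "\<And>y. y \<in> jacobi_zeros a b n \<Longrightarrow> y \<le> jacobi_max_zero a b n"
    unfolding max using jacobi_zeros_simple(1)[OF assms(1,2)] by simp
qed

section \<open>Gauss--Radau quadrature\<close>

definition jacobi_integral :: "real \<Rightarrow> real \<Rightarrow> real poly \<Rightarrow> real" where
  "jacobi_integral a b g = integral {-1..1} (\<lambda>x. poly g x * jacobi_weight0 a b x)"

lemma jacobi_integral_add:
  "a > -1 \<Longrightarrow> b > -1 \<Longrightarrow> jacobi_integral a b (p + q) = jacobi_integral a b p + jacobi_integral a b q"
  unfolding jacobi_integral_def by (simp add: distrib_right integral_add integrable_poly_jacobi_weight0)

lemma jacobi_integral_smult: "jacobi_integral a b (smult c p) = c * jacobi_integral a b p"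
  unfolding jacobi_integral_def by (simp add: mult.assoc)

lemma jacobi_integral_0 [simp]: "jacobi_integral a b 0 = 0"
  by (simp add: jacobi_integral_def)

lemma jacobi_integral_sum:
  "a > -1 \<Longrightarrow> b > -1 \<Longrightarrow> jacobi_integral a b (\<Sum>y\<in>A. p y) = (\<Sum>y\<in>A. jacobi_integral a b (p y))"
  by (induction A rule: infinite_finite_induct) (simp_all add: jacobi_integral_add)

definition lagrange_basis :: "real set \<Rightarrow> real \<Rightarrow> real poly" where
  "lagrange_basis N y = smult (1 / (\<Prod>z\<in>N - {y}. y - z)) (\<Prod>z\<in>N - {y}. [:-z, 1:])"

lemma poly_lagrange_basis:
  assumes "finite N" "y \<in> N" "x \<in> N"
  shows "poly (lagrange_basis N y) x = (if x = y then 1 else 0)"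
proof (cases "x = y")
  case True
  have "(\<Prod>z\<in>N - {y}. y - z) \<noteq> 0" using assms by auto
  then show ?thesis using True unfolding lagrange_basis_def by (simp add: poly_prod)
next
  case False
  have "(\<Prod>z\<in>N - {y}. x - z) = 0" using assms False by (intro prod_zero) auto
  then show ?thesis using False unfolding lagrange_basis_def by (simp add: poly_prod)
qed

lemma degree_lagrange_basis:
  assumes "finite N" "y \<in> N"
  shows "degree (lagrange_basis N y) \<le> card N - 1"
proof -
  have "degree (lagrange_basis N y) \<le> degree (\<Prod>z\<in>N - {y}. [:-z, 1:] :: real poly)"
    unfolding lagrange_basis_def by (rule degree_smult_le)
  also have "\<dots> = card (N - {y})"
    by (subst degree_prod_eq_sum_degree) auto
  also have "\<dots> = card N - 1" using assms by simp
  finally show ?thesis .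
qed

lemma lagrange_interpolation:
  fixes f :: "real poly"
  assumes "finite N"
  defines "L \<equiv> \<Sum>y\<in>N. smult (poly f y) (lagrange_basis N y)"
  shows "\<And>x. x \<in> N \<Longrightarrow> poly L x = poly f x" and "degree L \<le> card N - 1"
proof -
  fix x assume "x \<in> N"
  then have "poly L x = (\<Sum>y\<in>N. if y = x then poly f y else 0)"
    unfolding L_def poly_sum using assms by (intro sum.cong refl) (auto simp: poly_lagrange_basis)
  also have "\<dots> = poly f x" using \<open>x \<in> N\<close> assms by (simp add: sum.delta)
  finally show "poly L x = poly f x" .
next
  show "degree L \<le> card N - 1"
    unfolding L_def using assms(1)
  proof (rule degree_sum_le)
    fix y assume "y \<in> N"
    then show "degree (smult (poly f y) (lagrange_basis N y)) \<le> card N - 1"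
      using degree_lagrange_basis[OF assms(1)] degree_smult_le order.trans by blast
  qed
qed

definition radau_nodes :: "real \<Rightarrow> real \<Rightarrow> nat \<Rightarrow> real set" where
  "radau_nodes a b m = insert 1 (jacobi_zeros (a + 1) b m)"

lemma radau_nodes:
  assumes "a > -1" "b > -1"
  shows "finite (radau_nodes a b m)" "card (radau_nodes a b m) = m + 1"
proof -
  have "finite (jacobi_zeros (a + 1) b m)" "card (jacobi_zeros (a + 1) b m) = m"
    "1 \<notin> jacobi_zeros (a + 1) b m"
    using jacobi_zeros_simple[of "a + 1" b m] assms by auto
  then show "finite (radau_nodes a b m)" "card (radau_nodes a b m) = m + 1"
    unfolding radau_nodes_def by auto
qed

text \<open>The node polynomial is \<open>(x - 1) P\<^sub>m\<^sup>(\<^sup>a\<^sup>+\<^sup>1\<^sup>,\<^sup>b\<^sup>)\<close> up to a constant, and the factor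
  \<open>x - 1\<close> is absorbed into the weight.\<close>

lemma jacobi_integral_radau_node_poly:
  assumes "a > -1" "b > -1" "degree g < m"
  shows "jacobi_integral a b ((\<Prod>w\<in>radau_nodes a b m. [:-w, 1:]) * g) = 0"
proof -
  have a1: "a + 1 > -1" using assms by simp
  obtain c where c: "c \<noteq> 0" "jacobi_poly (a + 1) b m = smult c (\<Prod>w\<in>jacobi_zeros (a + 1) b m. [:-w, 1:])"
    using jacobi_zeros_simple(4)[OF a1 assms(2)] by blast
  have "(\<Prod>w\<in>radau_nodes a b m. [:-w, 1:]) = [:-1, 1:] * (\<Prod>w\<in>jacobi_zeros (a + 1) b m. [:-w, 1:])"
  proof -
    have "1 \<notin> jacobi_zeros (a + 1) b m" using jacobi_zeros_simple(3)[OF a1 assms(2), of m] by auto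
    then show ?thesis unfolding radau_nodes_def using jacobi_zeros_simple(1)[OF a1 assms(2)] by simp
  qed
  also have "\<dots> = smult (1 / c) ([:-1, 1:] * jacobi_poly (a + 1) b m)"
    using c by simp
  finally have nodes: "(\<Prod>w\<in>radau_nodes a b m. [:-w, 1:]) = smult (1 / c) ([:-1, 1:] * jacobi_poly (a + 1) b m)" .
  have "poly ([:-1, 1:] * jacobi_poly (a + 1) b m * g) x * jacobi_weight0 a b x
      = - (poly (jacobi_poly (a + 1) b m * g) x * jacobi_weight0 (a + 1) b x)" if "x \<in> {-1..1}" for x
  proof -
    have "poly ([:-1, 1:] * jacobi_poly (a + 1) b m * g) x * jacobi_weight0 a b x
        = ((x - 1) * jacobi_weight0 a b x) * poly (jacobi_poly (a + 1) b m * g) x"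
      by (simp add: algebra_simps)
    also have "(x - 1) * jacobi_weight0 a b x = - ((1 - x) ^ 1 * jacobi_weight0 a b x)"
      by (simp add: left_diff_distrib)
    also have "(1 - x) ^ 1 * jacobi_weight0 a b x = jacobi_weight0 (a + 1) b x"
      using jacobi_weight0_mult_power_minus[OF that, of 1 a b] by simp
    finally show ?thesis by simp
  qed
  then have "jacobi_integral a b ([:-1, 1:] * jacobi_poly (a + 1) b m * g)
      = - integral {-1..1} (\<lambda>x. poly (jacobi_poly (a + 1) b m * g) x * jacobi_weight0 (a + 1) b x)"
    unfolding jacobi_integral_def by (subst integral_cong) auto
  also have "\<dots> = 0"
    using integral_unique[OF jacobi_poly_orthogonal[OF a1 assms(2,3)]] by simp
  finally show ?thesis
    unfolding nodes jacobi_integral_smult[symmetric] by (simp add: jacobi_integral_smult)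
qed

text \<open>The interpolation error of \<open>f\<close> at the \<open>m + 1\<close> nodes is the node
  polynomial times a polynomial of degree \<open>< m\<close>.\<close>

theorem radau_quadrature:
  fixes f :: "real poly"
  assumes "a > -1" "b > -1" "degree f \<le> 2 * m"
  shows "jacobi_integral a b f
           = (\<Sum>y\<in>radau_nodes a b m. poly f y * jacobi_integral a b (lagrange_basis (radau_nodes a b m) y))"
proof -
  define N where "N = radau_nodes a b m"
  define L where "L = (\<Sum>y\<in>N. smult (poly f y) (lagrange_basis N y))"
  have fin: "finite N" and card: "card N = m + 1" unfolding N_def using radau_nodes[OF assms(1,2)] by auto
  note interp = lagrange_interpolation[OF fin, where f = f, folded L_def]
  have "jacobi_integral a b (f - L) = 0"
  proof (cases "f - L = 0")
    case True
    then show ?thesis by simp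
  next
    case False
    have "(\<Prod>w\<in>N. [:-w, 1:] ^ 1) dvd f - L"
    proof (rule prod_linear_powers_dvd[OF False fin])
      fix z assume "z \<in> N"
      then have "poly (f - L) z = 0" using interp(1) by simp
      then show "1 \<le> order z (f - L)" using False order_root[of "f - L" z] by simp
    qed
    then obtain g where g: "f - L = (\<Prod>w\<in>N. [:-w, 1:]) * g" by (auto elim: dvdE)
    have "degree (\<Prod>w\<in>N. [:-w, 1:] :: real poly) = m + 1"
      using degree_prod_linear_powers[OF fin, of "\<lambda>_. 1"] card by simp
    moreover have "degree (f - L) \<le> 2 * m"
      using assms(3) interp(2) card degree_diff_le_max[of f L] by simp
    ultimately have "degree g < m"
      using g False by (auto simp: degree_mult_eq)
    then show ?thesis unfolding g N_def by (rule jacobi_integral_radau_node_poly[OF assms(1,2)])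
  qed
  then have "jacobi_integral a b f = jacobi_integral a b L"
    using jacobi_integral_add[OF assms(1,2), of "f - L" L] by simp
  also have "\<dots> = (\<Sum>y\<in>N. poly f y * jacobi_integral a b (lagrange_basis N y))"
    unfolding L_def jacobi_integral_sum[OF assms(1,2)] jacobi_integral_smult ..
  finally show ?thesis unfolding N_def .
qed

lemma radau_weights_pos:
  assumes "a > -1" "b > -1" "y \<in> radau_nodes a b m"
  shows "jacobi_integral a b (lagrange_basis (radau_nodes a b m) y) > 0"
proof -
  define N where "N = radau_nodes a b m"
  define L where "L = lagrange_basis N y"
  have fin: "finite N" and card: "card N = m + 1" unfolding N_def using radau_nodes[OF assms(1,2)] by auto
  have y: "y \<in> N" unfolding N_def by fact
  have "degree (L ^ 2) \<le> 2 * m"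
    using degree_power_le[of L 2] degree_lagrange_basis[OF fin y] card unfolding L_def by linarith
  then have "jacobi_integral a b (L ^ 2) = (\<Sum>y'\<in>N. poly (L ^ 2) y' * jacobi_integral a b (lagrange_basis N y'))"
    unfolding N_def by (rule radau_quadrature[OF assms(1,2)])
  also have "\<dots> = (\<Sum>y'\<in>N. if y' = y then jacobi_integral a b (lagrange_basis N y') else 0)"
    by (intro sum.cong refl) (simp add: L_def poly_lagrange_basis[OF fin y])
  also have "\<dots> = jacobi_integral a b L" using fin y by (simp add: sum.delta L_def)
  finally have "jacobi_integral a b (L ^ 2) = jacobi_integral a b L" .
  moreover have "L \<noteq> 0" using poly_lagrange_basis[OF fin y y] unfolding L_def by auto
  then have "jacobi_integral a b (L ^ 2) > 0"
    unfolding jacobi_integral_def by (intro integral_poly_jacobi_weight0_pos[OF assms(1,2)]) auto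
  ultimately show ?thesis unfolding L_def N_def by simp
qed

lemma radau_nodes_vanish:
  fixes f :: "real poly"
  assumes "a > -1" "b > -1" "degree f \<le> 2 * m" "jacobi_integral a b f \<le> 0"
    and nonneg: "\<And>y. y \<in> radau_nodes a b m \<Longrightarrow> poly f y \<ge> 0"
    and y: "y \<in> radau_nodes a b m"
  shows "poly f y = 0"
proof -
  define N where "N = radau_nodes a b m"
  define w where "w z = jacobi_integral a b (lagrange_basis N z)" for z
  have fin: "finite N" unfolding N_def using radau_nodes[OF assms(1,2)] by auto
  have pos: "w z > 0" if "z \<in> N" for z
    using radau_weights_pos[OF assms(1,2)] that unfolding w_def N_def .
  have terms_nonneg: "poly f z * w z \<ge> 0" if "z \<in> N" for z
    using nonneg[of z] pos[OF that] that unfolding N_def by simp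
  have "(\<Sum>z\<in>N. poly f z * w z) = jacobi_integral a b f"
    using radau_quadrature[OF assms(1-3)] unfolding w_def N_def by (rule sym)
  moreover have "(\<Sum>z\<in>N. poly f z * w z) \<ge> 0" by (rule sum_nonneg) (rule terms_nonneg)
  ultimately have "(\<Sum>z\<in>N. poly f z * w z) = 0" using assms(4) by linarith
  moreover have "y \<in> N" unfolding N_def by (rule y)
  ultimately have "poly f y * w y = 0"
    using sum_nonneg_eq_0_iff[OF fin, of "\<lambda>z. poly f z * w z"] terms_nonneg by blast
  then show ?thesis using pos[OF \<open>y \<in> N\<close>] by simp
qed

lemma jacobi_weight_eq:
  "a > -1 \<Longrightarrow> b > -1 \<Longrightarrow> jacobi_weight a b x = jacobi_weight0 a b x / jacobi_mass a b"
  unfolding jacobi_weight_def using integral_unique[OF has_integral_jacobi_weight0] by simp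

lemma integral_poly_jacobi_weight:
  assumes "a > -1" "b > -1"
  shows "integral {-1..1} (\<lambda>x. poly g x * jacobi_weight a b x) = jacobi_integral a b g / jacobi_mass a b"
proof -
  have "integral {-1..1} (\<lambda>x. poly g x * jacobi_weight a b x)
      = integral {-1..1} (\<lambda>x. poly g x * jacobi_weight0 a b x / jacobi_mass a b)"
    using assms by (simp add: jacobi_weight_eq)
  also have "\<dots> = jacobi_integral a b g / jacobi_mass a b"
    unfolding jacobi_integral_def
    by (intro integral_unique has_integral_divide integrable_integral integrable_poly_jacobi_weight0 assms)
  finally show ?thesis .
qed

lemma jacobi_p_0: "a > -1 \<Longrightarrow> b > -1 \<Longrightarrow> jacobi_p a b 0 x = 1"
  using integral_poly_jacobi_weight[of a b 1] integral_unique[OF has_integral_jacobi_weight0, of a b]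
    jacobi_mass_pos[of a b]
  by (simp add: jacobi_p_def jacobiP_def jacobi_integral_def)

lemma jacobi_coeff_0:
  "a > -1 \<Longrightarrow> b > -1 \<Longrightarrow> jacobi_coeff a b (poly f) 0 = jacobi_integral a b f / jacobi_mass a b"
  unfolding jacobi_coeff_def by (simp add: jacobi_p_0 integral_poly_jacobi_weight)

lemma jacobi_p_eq_scaled_jacobi_poly:
  assumes "a > -1" "b > -1"
  obtains N where "N > 0" "\<And>x. jacobi_p a b n x = poly (jacobi_poly a b n) x / sqrt N"
proof
  define N where "N = integral {-1..1} (\<lambda>t. (jacobiP a b n t)\<^sup>2 * jacobi_weight a b t)"
  show "\<And>x. jacobi_p a b n x = poly (jacobi_poly a b n) x / sqrt N"
    unfolding jacobi_p_def N_def poly_jacobi_poly ..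
  have "N = jacobi_integral a b (jacobi_poly a b n ^ 2) / jacobi_mass a b"
    unfolding N_def using integral_poly_jacobi_weight[OF assms, of "jacobi_poly a b n ^ 2"]
    by (simp add: poly_jacobi_poly)
  moreover have "jacobi_integral a b (jacobi_poly a b n ^ 2) > 0"
    unfolding jacobi_integral_def using jacobi_poly_nonzero[OF assms(1)]
    by (intro integral_poly_jacobi_weight0_pos[OF assms]) auto
  ultimately show "N > 0" using jacobi_mass_pos[OF assms] by simp
qed

section \<open>The extremal problem\<close>

lemma order_ge_2_at_interior_min:
  fixes f :: "real poly"
  assumes "f \<noteq> 0" "poly f z = 0" "l < z" "z < u" "\<And>x. x \<in> {l<..<u} \<Longrightarrow> poly f x \<ge> 0"
  shows "order z f \<ge> 2"
proof -
  have "pderiv f \<noteq> 0"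
  proof
    assume "pderiv f = 0"
    then obtain h where "f = [:h:]" by (blast dest: pderiv_iszero)
    with assms(1,2) show False by simp
  qed
  moreover have "poly (pderiv f) z = 0"
  proof (rule DERIV_local_min[OF poly_DERIV])
    show "0 < min (z - l) (u - z)" using assms(3,4) by simp
    show "\<forall>y. \<bar>z - y\<bar> < min (z - l) (u - z) \<longrightarrow> poly f z \<le> poly f y"
    proof (intro allI impI)
      fix y assume "\<bar>z - y\<bar> < min (z - l) (u - z)"
      then have "y \<in> {l<..<u}" by (auto simp: abs_less_iff)
      then show "poly f z \<le> poly f y" using assms(2,5) by simp
    qed
  qed
  ultimately have "order z (pderiv f) \<noteq> 0" by (simp add: order_root)
  then show ?thesis using order_pderiv[OF assms(1,2)] by simp
qed

text \<open>By quadrature \<open>f\<close> vanishes at every node; the nodes below \<open>x\<^sub>1\<close> are interior minima of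
  \<open>f\<close>, hence double zeros.\<close>

lemma radau_extremal_dvd:
  fixes a b :: real and m :: nat and f :: "real poly"
  defines "x1 \<equiv> jacobi_max_zero (a + 1) b m"
  defines "A \<equiv> jacobi_zeros (a + 1) b m - {x1}"
  assumes ab: "a > -1" "b > -1" and m: "m \<ge> 1"
    and deg: "degree f \<le> 2 * m" and int: "jacobi_integral a b f \<le> 0"
    and f1: "poly f 1 \<ge> 0" and f0: "f \<noteq> 0"
    and nonneg: "\<forall>x\<in>{-1..<x1}. poly f x \<ge> 0"
  shows "(\<Prod>w\<in>radau_nodes a b m. [:-w, 1:] ^ (if w \<in> A then 2 else 1)) dvd f"
proof -
  have a1: "a + 1 > -1" using ab by simp
  note x1 = jacobi_max_zero[OF a1 ab(2) m, folded x1_def]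
  have A_below: "-1 < y \<and> y < x1" if "y \<in> A" for y
    using that x1(4) jacobi_zeros_simple(3)[OF a1 ab(2), of m] unfolding A_def by force
  have nodes: "radau_nodes a b m = insert 1 (insert x1 A)"
    unfolding radau_nodes_def A_def using x1(1) by auto
  have fx1: "poly f x1 \<ge> 0"
  proof (rule tendsto_lowerbound)
    show "(poly f \<longlongrightarrow> poly f x1) (at_left x1)" by (intro tendsto_intros)
    show "\<forall>\<^sub>F x in at_left x1. poly f x \<ge> 0"
      using nonneg x1(2) unfolding eventually_at_left_field by (intro exI[of _ "-1"]) auto
  qed simp
  have vanish: "poly f y = 0" if "y \<in> radau_nodes a b m" for y
  proof (rule radau_nodes_vanish[OF ab deg int _ that])
    fix z assume "z \<in> radau_nodes a b m"
    then consider "z = 1" | "z = x1" | "z \<in> A" unfolding nodes by blast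
    then show "poly f z \<ge> 0"
    proof cases
      case 3
      then have "z \<in> {-1..<x1}" using A_below by force
      then show ?thesis using nonneg by blast
    qed (use f1 fx1 in auto)
  qed
  show ?thesis
  proof (rule prod_linear_powers_dvd[OF f0 radau_nodes(1)[OF ab]])
    fix z assume z: "z \<in> radau_nodes a b m"
    show "(if z \<in> A then 2 else 1) \<le> order z f"
    proof (cases "z \<in> A")
      case True
      then show ?thesis
        using order_ge_2_at_interior_min[OF f0 vanish[OF z], of "-1" x1] A_below nonneg by auto
    next
      case False
      then show ?thesis using vanish[OF z] f0 order_root[of f z] by simp
    qed
  qed
qed

theorem radau_extremal:
  fixes a b :: real and m :: nat and f :: "real poly"
  defines "x1 \<equiv> jacobi_max_zero (a + 1) b m"
  defines "A \<equiv> jacobi_zeros (a + 1) b m - {x1}"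
  assumes ab: "a > -1" "b > -1" and m: "m \<ge> 1"
    and deg: "degree f \<le> 2 * m" and int: "jacobi_integral a b f \<le> 0"
    and f1: "poly f 1 \<ge> 0" and f0: "f \<noteq> 0"
    and nonneg: "\<forall>x\<in>{-1..<x1}. poly f x \<ge> 0"
  shows "\<exists>c>0. \<forall>x. poly f x = c * ((x - 1) * (x - x1) * (\<Prod>y\<in>A. (x - y)^2))"
proof -
  have a1: "a + 1 > -1" using ab by simp
  note zeros = jacobi_zeros_simple[OF a1 ab(2), of m]
  note x1 = jacobi_max_zero[OF a1 ab(2) m, folded x1_def]
  have finA: "finite A" and cardA: "card A = m - 1" and x1A: "x1 \<notin> A" and oneA: "1 \<notin> A"
    unfolding A_def using zeros x1(1) by auto
  have nodes: "radau_nodes a b m = insert 1 (insert x1 A)"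
    unfolding radau_nodes_def A_def using x1(1) by auto
  define k where "k w = (if w \<in> A then 2 else 1 :: nat)" for w
  define P where "P = (\<Prod>w\<in>radau_nodes a b m. [:-w, 1:] ^ k w :: real poly)"
  have "P dvd f"
    using radau_extremal_dvd[OF ab m deg int f1 f0] nonneg unfolding P_def k_def x1_def A_def .
  moreover have "degree P = 2 * m"
  proof -
    have "degree P = (\<Sum>w\<in>radau_nodes a b m. k w)"
      unfolding P_def by (rule degree_prod_linear_powers[OF radau_nodes(1)[OF ab]])
    also have "\<dots> = k 1 + (k x1 + (\<Sum>w\<in>A. k w))"
      unfolding nodes using finA x1A oneA x1(3) by simp
    also have "(\<Sum>w\<in>A. k w) = 2 * card A" by (simp add: k_def)
    finally show ?thesis using x1A oneA x1(3) cardA m by (simp add: k_def)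
  qed
  ultimately obtain c where c: "c \<noteq> 0" "f = smult c P"
    using deg by (elim dvd_degree_le_imp_smult[OF _ f0]) simp_all
  have poly_P: "poly P x = (x - 1) * (x - x1) * (\<Prod>y\<in>A. (x - y)^2)" for x
    unfolding P_def nodes using finA x1A oneA x1(3)
    by (simp add: poly_prod k_def algebra_simps cong: prod.cong)
  have "infinite ({-1<..<x1} - A)" using x1(2) finA by (intro Diff_infinite_finite) auto
  then obtain x where x: "x \<in> {-1<..<x1}" "x \<notin> A" by (metis Diff_iff ex_in_conv finite.emptyI)
  have "(\<Prod>y\<in>A. (x - y)^2) > 0" using x(2) by (intro prod_pos) auto
  moreover have "(x - 1) * (x - x1) > 0" using x(1) x1(3) by (simp add: mult_neg_neg)
  ultimately have "poly P x > 0" unfolding poly_P by simp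
  moreover have "poly f x \<ge> 0" using nonneg x(1) by auto
  ultimately have "c > 0" using c by (simp add: zero_le_mult_iff)
  then show ?thesis using c(2) poly_P by auto
qed

theorem radau_extremal_jacobi_p:
  fixes a b :: real and m :: nat and f :: "real poly"
  defines "x1 \<equiv> jacobi_max_zero (a + 1) b m"
  assumes ab: "a > -1" "b > -1" and m: "m \<ge> 1"
    and deg: "degree f \<le> 2 * m" and int: "jacobi_integral a b f \<le> 0"
    and f1: "poly f 1 \<ge> 0" and f0: "f \<noteq> 0"
    and nonneg: "\<forall>x\<in>{-1..<x1}. poly f x \<ge> 0"
  shows "\<exists>c>0. \<forall>x. x \<noteq> x1 \<longrightarrow> poly f x = c * ((1 - x) * (jacobi_p (a + 1) b m x)\<^sup>2 / (x1 - x))"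
proof -
  define A where "A = jacobi_zeros (a + 1) b m - {x1}"
  have a1: "a + 1 > -1" using ab by simp
  obtain c where c: "c > 0" "\<And>x. poly f x = c * ((x - 1) * (x - x1) * (\<Prod>y\<in>A. (x - y)^2))"
    using radau_extremal[OF ab m deg int f1 f0] nonneg unfolding x1_def A_def by blast
  obtain N where N: "N > 0" "\<And>x. jacobi_p (a + 1) b m x = poly (jacobi_poly (a + 1) b m) x / sqrt N"
    using jacobi_p_eq_scaled_jacobi_poly[OF a1 ab(2)] by blast
  obtain C where C: "C \<noteq> 0" "jacobi_poly (a + 1) b m = smult C (\<Prod>w\<in>jacobi_zeros (a + 1) b m. [:-w, 1:])"
    using jacobi_zeros_simple(4)[OF a1 ab(2)] by blast
  have "poly (jacobi_poly (a + 1) b m) x = C * (x - x1) * (\<Prod>y\<in>A. x - y)" for x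
  proof -
    have "poly (jacobi_poly (a + 1) b m) x = C * (\<Prod>y\<in>jacobi_zeros (a + 1) b m. x - y)"
      unfolding C(2) by (simp add: poly_prod)
    also have "(\<Prod>y\<in>jacobi_zeros (a + 1) b m. x - y) = (x - x1) * (\<Prod>y\<in>A. x - y)"
      unfolding A_def x1_def
      by (rule prod.remove[OF jacobi_zeros_simple(1)[OF a1 ab(2)] jacobi_max_zero(1)[OF a1 ab(2) m]])
    finally show ?thesis by (simp add: mult.assoc)
  qed
  then have jp: "(jacobi_p (a + 1) b m x)\<^sup>2 = C^2 * (x - x1)^2 * (\<Prod>y\<in>A. (x - y)^2) / N" for x
    using N by (simp add: power_divide power_mult_distrib prod_power_distrib)
  show ?thesis
  proof (intro exI[of _ "c * N / C^2"] conjI allI impI)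
    show "c * N / C^2 > 0" using c(1) N(1) C(1) by simp
    fix x assume "x \<noteq> x1"
    then show "poly f x = c * N / C^2 * ((1 - x) * (jacobi_p (a + 1) b m x)\<^sup>2 / (x1 - x))"
      unfolding jp c(2) using N(1) C(1) by (simp add: field_simps power2_eq_square)
  qed
qed

text \<open>Beyond \<open>x\<^sub>1\<close> the extremal polynomial is negative, because of the simple zero at \<open>x\<^sub>1\<close>.\<close>

theorem radau_nonneg_interval_bound:
  fixes a b :: real and m :: nat and f :: "real poly"
  assumes ab: "a > -1" "b > -1" and m: "m \<ge> 1"
    and deg: "degree f \<le> 2 * m" and int: "jacobi_integral a b f \<le> 0"
    and f1: "poly f 1 \<ge> 0" and f0: "f \<noteq> 0"
    and nonneg: "\<forall>x\<in>{-1..<t}. poly f x \<ge> 0"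
  shows "t \<le> jacobi_max_zero (a + 1) b m"
proof (rule ccontr)
  define x1 where "x1 = jacobi_max_zero (a + 1) b m"
  have a1: "a + 1 > -1" using ab by simp
  note x1 = jacobi_max_zero[OF a1 ab(2) m, folded x1_def]
  assume "\<not> t \<le> jacobi_max_zero (a + 1) b m"
  then have "x1 < t" unfolding x1_def by simp
  with nonneg have "\<forall>x\<in>{-1..<x1}. poly f x \<ge> 0" by auto
  from radau_extremal[OF ab m deg int f1 f0, folded x1_def, OF this]
  obtain c where c: "c > 0"
    "\<And>x. poly f x = c * ((x - 1) * (x - x1) * (\<Prod>y\<in>jacobi_zeros (a + 1) b m - {x1}. (x - y)^2))"
    by blast
  define x where "x = (x1 + min t 1) / 2"
  have x: "x1 < x" "x < t" "x < 1" using \<open>x1 < t\<close> x1(3) unfolding x_def by auto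
  have "(\<Prod>y\<in>jacobi_zeros (a + 1) b m - {x1}. (x - y)^2) > 0"
    using x1(4) x(1) by (intro prod_pos) force
  moreover have "(x - 1) * (x - x1) < 0" using x by (simp add: mult_neg_pos)
  ultimately have "poly f x < 0" using c by (simp add: mult_pos_neg mult_neg_pos)
  moreover have "poly f x \<ge> 0" using nonneg x x1(2) by simp
  ultimately show False by simp
qed

lemma r_I_lower_bound:
  assumes "\<And>r. r \<in> {0<..2} \<Longrightarrow> \<forall>x\<in>{-1..<1 - r}. f x \<ge> 0 \<Longrightarrow> \<rho> \<le> r"
  shows "\<rho> \<le> r_I f"
  unfolding r_I_def by (rule cInf_greatest) (use assms in \<open>auto intro: exI[of _ 2]\<close>)

lemma r_I_upper_bound:
  assumes "r \<in> {0<..2}" "\<forall>x\<in>{-1..<1 - r}. f x \<ge> 0"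
  shows "r_I f \<le> r"
  unfolding r_I_def by (rule cInf_lower) (use assms in \<open>auto intro: bdd_belowI[of _ 0]\<close>)

lemma r_I_nonneg:
  assumes "x \<in> {-1..<1 - r_I f}"
  shows "f x \<ge> 0"
proof -
  define S where "S = {r \<in> {0<..2}. \<forall>x\<in>{-1..<1 - r}. f x \<ge> 0}"
  have "Inf S < 1 - x" using assms unfolding r_I_def S_def by simp
  moreover have "S \<noteq> {}" "bdd_below S" unfolding S_def by (auto intro: exI[of _ 2] bdd_belowI[of _ 0])
  ultimately obtain r where "r \<in> S" "r < 1 - x" using cInf_less_iff by blast
  then show ?thesis using assms unfolding S_def by auto
qed

theorem mainTheorem9:
  fixes s \<alpha> \<beta> :: real and m :: nat and f :: "real poly"
  assumes "s = 1 \<or> s = -1"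
    and "\<alpha> \<ge> \<beta>" and "\<beta> \<ge> -1/2"
    and "m \<ge> 1"
    and "class_B s \<alpha> \<beta> (poly f)"
    and "f \<noteq> 0"
    and "degree f \<le> 2 * m"
    and "s = 1 \<Longrightarrow> poly f 1 = 0"
  shows "r_I (poly f) \<ge> 1 - jacobi_max_zero (\<alpha> + 1) \<beta> m \<and>
         (r_I (poly f) = 1 - jacobi_max_zero (\<alpha> + 1) \<beta> m \<longleftrightarrow>
           (\<exists>c>0. \<forall>x. x \<noteq> jacobi_max_zero (\<alpha> + 1) \<beta> m \<longrightarrow>
              poly f x = c * ((1 - x) * (jacobi_p (\<alpha> + 1) \<beta> m x)\<^sup>2
                               / (jacobi_max_zero (\<alpha> + 1) \<beta> m - x))))"
proof -
  define x1 where "x1 = jacobi_max_zero (\<alpha> + 1) \<beta> m"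
  have ab: "\<alpha> > -1" "\<beta> > -1" using assms(2,3) by linarith+
  have int: "jacobi_integral \<alpha> \<beta> f \<le> 0"
    using assms(5) jacobi_mass_pos[OF ab] by (auto simp: class_B_def jacobi_coeff_0[OF ab] divide_le_0_iff)
  have f1: "poly f 1 \<ge> 0" using assms(1,5,8) unfolding class_B_def by auto
  note radau = ab assms(4,7) int f1 assms(6)
  have x1: "-1 < x1" "x1 < 1" using jacobi_max_zero(2,3)[of "\<alpha> + 1" \<beta> m] ab assms(4) by (auto simp: x1_def)
  have lower: "1 - x1 \<le> r_I (poly f)"
    by (rule r_I_lower_bound) (use radau_nonneg_interval_bound[OF radau] in \<open>force simp: x1_def\<close>)
  have "r_I (poly f) = 1 - x1 \<longleftrightarrow>
      (\<exists>c>0. \<forall>x. x \<noteq> x1 \<longrightarrow> poly f x = c * ((1 - x) * (jacobi_p (\<alpha> + 1) \<beta> m x)\<^sup>2 / (x1 - x)))"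
  proof
    assume "r_I (poly f) = 1 - x1"
    then show "\<exists>c>0. \<forall>x. x \<noteq> x1 \<longrightarrow> poly f x = c * ((1 - x) * (jacobi_p (\<alpha> + 1) \<beta> m x)\<^sup>2 / (x1 - x))"
      unfolding x1_def using r_I_nonneg[of _ "poly f"] by (intro radau_extremal_jacobi_p[OF radau]) simp
  next
    assume "\<exists>c>0. \<forall>x. x \<noteq> x1 \<longrightarrow> poly f x = c * ((1 - x) * (jacobi_p (\<alpha> + 1) \<beta> m x)\<^sup>2 / (x1 - x))"
    then have "\<forall>x\<in>{-1..<1 - (1 - x1)}. poly f x \<ge> 0" using x1 by force
    then have "r_I (poly f) \<le> 1 - x1" using x1 by (intro r_I_upper_bound) auto
    with lower show "r_I (poly f) = 1 - x1" by simp
  qed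
  with lower show ?thesis unfolding x1_def by blast
qed

end
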